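(* Let $q$ be a prime power and $1\le k\le n-1$. If there exists a Cameron-Liebler $k$-set with parameter $x$ in $\mathrm{AG}(n,q)$, then there exists a Cameron-Liebler $k$-set of parameter $x+\frac{q^{n-k}-1}{q^{k+1}-1}$ in the projective closure $\mathrm{PG}(n,q)$ of $\mathrm{AG}(n,q)$.
   Context: A $k$-space is a $k$-dimensional projective subspace. $\left[{a\atop b}\right]_q=\frac{(q^a-1)\cdots(q^{a-b+1}-1)}{(q^b-1)\cdots(q-1)}$. $\mathrm{AG}(n,q)$ is $\mathrm{PG}(n,q)$ with a hyperplane $\pi_\infty$ removed; affine points are points outside $\pi_\infty$, affine $k$-spaces are $k$-spaces not contained in $\pi_\infty$. Let $P_n$ be the point-($k$-space) incidence matrix of $\mathrm{PG}(n,q)$ and $A_n$ the incidence matrix of affine points versus affine $k$-spaces. A set $\mathcal{L}$ of $k$-spaces of $\mathrm{PG}(n,q)$ is a Cameron-Liebler $k$-set of $\mathrm{PG}(n,q)$ if its characteristic vector lies in the real row space $\mathrm{Im}(P_n^T)$, with parameter $|\mathcal{L}|/\left[{n\atop k}\right]_q$; a set of affine $k$-spaces is a Cameron-Liebler $k$-set of $\mathrm{AG}(n,q)$ if its characteristic vector lies in $\mathrm{Im}(A_n^T)$, with parameter $|\mathcal{L}|/\left[{n\atop k}\right]_q$. *)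

theory Defs
  imports "HOL-Analysis.Analysis"
begin

text \<open>PG(n,q) is modelled as the lattice of subspaces of the vector space 'a^'n over a
finite field 'a with CARD('a) = q and CARD('n) = n+1. A projective m-space is a
vector subspace of (vector) dimension m+1.\<close>

definition proj_spaces :: "nat \<Rightarrow> ('a::field ^ 'n) set set" where
  "proj_spaces m = {S. vec.subspace S \<and> vec.dim S = Suc m}"

abbreviation proj_points :: "('a::field ^ 'n) set set" where
  "proj_points \<equiv> proj_spaces 0"

definition gauss_binom :: "real \<Rightarrow> nat \<Rightarrow> nat \<Rightarrow> real" where
  "gauss_binom q a b = (\<Prod>i<b. q ^ (a - i) - 1) / (\<Prod>i<b. q ^ (i + 1) - 1)"

text \<open>Characteristic vector of L lies in the real row space of the point-(k-space)
incidence matrix of PG(n,q): it is a real linear combination of the rows.\<close>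
definition CL_proj :: "nat \<Rightarrow> ('a::field ^ 'n) set set \<Rightarrow> bool" where
  "CL_proj k L \<longleftrightarrow> L \<subseteq> proj_spaces k \<and>
     (\<exists>f :: ('a ^ 'n) set \<Rightarrow> real. \<forall>K \<in> proj_spaces k.
        (if K \<in> L then 1 else 0) = (\<Sum>p \<in> {p \<in> proj_points. p \<subseteq> K}. f p))"

text \<open>Affine points / affine k-spaces w.r.t. the hyperplane at infinity H.\<close>
definition aff_spaces :: "('a::field ^ 'n) set \<Rightarrow> nat \<Rightarrow> ('a ^ 'n) set set" where
  "aff_spaces H m = {S \<in> proj_spaces m. \<not> S \<subseteq> H}"

definition CL_aff :: "('a::field ^ 'n) set \<Rightarrow> nat \<Rightarrow> ('a ^ 'n) set set \<Rightarrow> bool" where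
  "CL_aff H k L \<longleftrightarrow> L \<subseteq> aff_spaces H k \<and>
     (\<exists>f :: ('a ^ 'n) set \<Rightarrow> real. \<forall>K \<in> aff_spaces H k.
        (if K \<in> L then 1 else 0) = (\<Sum>p \<in> {p \<in> aff_spaces H 0. p \<subseteq> K}. f p))"

end

theory Submission
  imports Defs
begin

text \<open>Add to the affine Cameron-Liebler set all k-spaces of the hyperplane at infinity H.
Let \<theta>(j) = (q^(j+1) - 1)/(q - 1) be the number of points of a j-space. If f is a point
weight exhibiting the affine set, a projective weight is obtained by giving every point of H
the weight c = 1/\<theta>(k) and every affine point p the weight f p - d. A k-space inside H then
has weight sum \<theta>(k) c = 1, while a k-space K not inside H has \<theta>(k) - \<theta>(k-1) affine points
and the \<theta>(k-1) points of the (k-1)-space K \<inter> H, so d is chosen with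
d (\<theta>(k) - \<theta>(k-1)) = c \<theta>(k-1). The parameter grows by the number [n over k+1]_q of
k-spaces of H divided by [n over k]_q, which is (q^(n-k) - 1)/(q^(k+1) - 1).\<close>

lemma two_le_card_field: "2 \<le> CARD('a::{field,finite})"
proof -
  have "card {0::'a, 1} = 2" by simp
  moreover have "card {0::'a, 1} \<le> CARD('a)" by (rule card_mono) simp_all
  ultimately show ?thesis by simp
qed

lemma card_span_insert:
  fixes v :: "'a::{field,finite} ^ 'n"
  assumes v: "v \<notin> vec.span B"
  shows "card (vec.span (insert v B)) = CARD('a) * card (vec.span B)"
proof -
  let ?h = "\<lambda>(a, w). a *s v + w"
  have image: "vec.span (insert v B) = ?h ` (UNIV \<times> vec.span B)"
  proof safe
    fix x assume "x \<in> vec.span (insert v B)"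
    then obtain a where "x - a *s v \<in> vec.span B" by (auto simp: vec.span_insert)
    then show "x \<in> ?h ` (UNIV \<times> vec.span B)"
      by (intro image_eqI[of _ _ "(a, x - a *s v)"]) auto
  next
    fix a w assume "w \<in> vec.span B"
    then show "a *s v + w \<in> vec.span (insert v B)"
      by (meson insertI1 subset_insertI vec.span_add vec.span_base vec.span_mono
          vec.span_scale subsetD)
  qed
  have "inj_on ?h (UNIV \<times> vec.span B)"
  proof (rule inj_onI, clarify)
    fix a w a' w'
    assume w: "w \<in> vec.span B" "w' \<in> vec.span B" and eq: "a *s v + w = a' *s v + w'"
    show "a = a' \<and> w = w'"
    proof (cases "a = a'")
      case True
      then show ?thesis using eq by simp
    next
      case False
      have "(a - a') *s v = w' - w"
        using eq by (simp add: algebra_simps vec.scale_left_diff_distrib)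
      then have "inverse (a - a') *s ((a - a') *s v) \<in> vec.span B"
        using w by (simp add: vec.span_diff vec.span_scale)
      moreover have "inverse (a - a') *s ((a - a') *s v) = v"
        using False by (metis vec.scale_scale vec.scale_one left_inverse right_minus_eq)
      ultimately show ?thesis using v by simp
    qed
  qed
  then show ?thesis unfolding image by (simp add: card_image card_cartesian_product)
qed

lemma card_span_independent:
  fixes B :: "('a::{field,finite} ^ 'n) set"
  assumes "vec.independent B"
  shows "card (vec.span B) = CARD('a) ^ card B"
proof -
  have "finite B" by simp
  then show ?thesis using assms
  proof (induction B rule: finite_induct)
    case empty
    then show ?case by (simp add: vec.span_empty)
  next
    case (insert v B)
    then have "vec.independent B" "v \<notin> vec.span B" by (simp_all add: vec.independent_insert)
    then show ?case using insert.IH insert.hyps card_span_insert[of v B] by simp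
  qed
qed

lemma card_subspace:
  fixes S :: "('a::{field,finite} ^ 'n) set"
  assumes "vec.subspace S"
  shows "card S = CARD('a) ^ vec.dim S"
proof -
  obtain B where B: "B \<subseteq> S" "vec.independent B" "S \<subseteq> vec.span B" "card B = vec.dim S"
    using vec.basis_exists by blast
  then have "vec.span B = S" using assms by (simp add: vec.span_subspace)
  then show ?thesis using card_span_independent[OF B(2)] B(4) by simp
qed

lemma span_singleton_in_proj_points:
  fixes v :: "'a::field ^ 'n"
  assumes "v \<noteq> 0"
  shows "vec.span {v} \<in> proj_points"
  using assms by (simp add: proj_spaces_def vec.dim_span_eq_card_independent)

lemma proj_point_eq_span_singleton:
  fixes p :: "('a::field ^ 'n) set"
  assumes "p \<in> proj_points" "v \<in> p" "v \<noteq> 0"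
  shows "p = vec.span {v}"
proof -
  have p: "vec.subspace p" "vec.dim p = 1" using assms(1) by (auto simp: proj_spaces_def)
  then have "vec.span {v} \<subseteq> p" using assms(2) by (simp add: vec.span_minimal)
  moreover have "vec.dim (vec.span {v}) = 1"
    using assms(3) by (simp add: vec.dim_span_eq_card_independent)
  ultimately show ?thesis using p vec.subspace_dim_equal[of "vec.span {v}" p] by simp
qed

text \<open>The nonzero vectors of S are partitioned by the points of S, each contributing q - 1 of them.\<close>

lemma card_proj_points_subspace_mult:
  fixes S :: "('a::{field,finite} ^ 'n) set"
  assumes "vec.subspace S"
  shows "card {p \<in> (proj_points :: ('a ^ 'n) set set). p \<subseteq> S} * (CARD('a) - 1) = card S - 1"
proof -
  define P where "P = {p \<in> (proj_points :: ('a ^ 'n) set set). p \<subseteq> S}"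
  have cover: "S - {0} = (\<Union>p\<in>P. p - {0})"
  proof
    show "S - {0} \<subseteq> (\<Union>p\<in>P. p - {0})"
    proof
      fix v assume "v \<in> S - {0}"
      then show "v \<in> (\<Union>p\<in>P. p - {0})"
        using span_singleton_in_proj_points[of v] assms
        by (intro UN_I[of "vec.span {v}"]) (auto simp: P_def vec.span_minimal vec.span_base)
    qed
  qed (auto simp: P_def)
  have card_point: "card (p - {0}) = CARD('a) - 1" if "p \<in> P" for p
  proof -
    have "vec.subspace p" "vec.dim p = 1" using that by (auto simp: P_def proj_spaces_def)
    then have "card p = CARD('a)" "0 \<in> p" using card_subspace[of p] by (auto simp: vec.subspace_0)
    then show ?thesis by simp
  qed
  have "card (S - {0}) = (\<Sum>p\<in>P. card (p - {0}))"
  proof -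
    have "(p - {0}) \<inter> (p' - {0}) = {}" if "p \<in> P" "p' \<in> P" "p \<noteq> p'" for p p'
      using that proj_point_eq_span_singleton unfolding P_def by blast
    then show ?thesis unfolding cover by (intro card_UN_disjoint) auto
  qed
  also have "\<dots> = card P * (CARD('a) - 1)" using card_point by simp
  finally show ?thesis using vec.subspace_0[OF assms] by (simp add: P_def)
qed

lemma card_proj_points_subspace:
  fixes S :: "('a::{field,finite} ^ 'n) set"
  assumes "vec.subspace S"
  shows "real (card {p \<in> (proj_points :: ('a ^ 'n) set set). p \<subseteq> S})
          = (real CARD('a) ^ vec.dim S - 1) / (real CARD('a) - 1)"
proof -
  let ?P = "{p \<in> (proj_points :: ('a ^ 'n) set set). p \<subseteq> S}"
  have q: "2 \<le> CARD('a)" by (rule two_le_card_field)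
  then have "1 \<le> CARD('a) ^ vec.dim S" by simp
  then have "real (card ?P) * (real CARD('a) - 1) = real CARD('a) ^ vec.dim S - 1"
    using arg_cong[OF card_proj_points_subspace_mult[OF assms], of real] q
    by (simp add: card_subspace[OF assms] of_nat_diff)
  moreover have "real CARD('a) - 1 \<noteq> 0" using q by simp
  ultimately show ?thesis by (simp add: field_simps)
qed

lemma dim_Int_hyperplane:
  fixes K H :: "('a::field ^ 'n) set"
  assumes "vec.subspace K" "vec.subspace H" "Suc (vec.dim H) = CARD('n)" "\<not> K \<subseteq> H"
  shows "Suc (vec.dim (K \<inter> H)) = vec.dim K"
proof -
  define M where "M = {x + y |x y. x \<in> K \<and> y \<in> H}"
  have M: "vec.subspace M" unfolding M_def using assms(1,2) by (rule vec.subspace_sums)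
  obtain z where z: "z \<in> K" "z \<notin> H" using assms(4) by blast
  have "H \<subset> M"
    using z vec.subspace_0[OF assms(1)] vec.subspace_0[OF assms(2)] unfolding M_def by force
  moreover have "vec.span H = H" "vec.span M = M"
    using M assms(2) by (simp_all add: vec.span_eq_iff)
  ultimately have "vec.dim H < vec.dim M" by (metis vec.dim_psubset)
  moreover have "vec.dim M \<le> CARD('n)" by (rule dim_subset_UNIV_cart_gen)
  moreover have "vec.dim M + vec.dim (K \<inter> H) = vec.dim K + vec.dim H"
    unfolding M_def using assms(1,2) by (rule vec.dim_sums_Int)
  ultimately show ?thesis using assms(3) by simp
qed

subsection \<open>Counting subspaces\<close>

definition independent_lists :: "('a::field ^ 'n) set \<Rightarrow> nat \<Rightarrow> ('a ^ 'n) list set" where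
  "independent_lists V m =
     {xs. length xs = m \<and> distinct xs \<and> set xs \<subseteq> V \<and> vec.independent (set xs)}"

lemma finite_independent_lists:
  "finite (independent_lists (V :: ('a::{field,finite} ^ 'n) set) m)"
proof -
  have "independent_lists V m \<subseteq> {xs. set xs \<subseteq> UNIV \<and> length xs = m}"
    by (auto simp: independent_lists_def)
  then show ?thesis by (rule finite_subset) (rule finite_lists_length_eq, simp)
qed

lemma independent_lists_Suc:
  "independent_lists V (Suc m) = (\<lambda>(xs, v). xs @ [v]) `
     (SIGMA xs:independent_lists V m. V - vec.span (set xs))"
proof safe
  fix ys assume ys: "ys \<in> independent_lists V (Suc m)"
  then have "ys \<noteq> []" by (auto simp: independent_lists_def)
  define xs v where "xs = butlast ys" and "v = last ys"
  have ys_eq: "ys = xs @ [v]" using \<open>ys \<noteq> []\<close> by (simp add: xs_def v_def)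
  have "vec.independent (insert v (set xs))" "v \<notin> set xs" "distinct xs" "length xs = m"
    "set xs \<subseteq> V" "v \<in> V"
    using ys unfolding independent_lists_def ys_eq by auto
  then have "xs \<in> independent_lists V m" "v \<in> V - vec.span (set xs)"
    by (auto simp: independent_lists_def vec.independent_insert)
  then show "ys \<in> (\<lambda>(xs, v). xs @ [v]) ` (SIGMA xs:independent_lists V m. V - vec.span (set xs))"
    using ys_eq by force
next
  fix xs v assume "xs \<in> independent_lists V m" "v \<in> V" "v \<notin> vec.span (set xs)"
  moreover from this have "v \<notin> set xs" using vec.span_base by blast
  ultimately show "xs @ [v] \<in> independent_lists V (Suc m)"
    by (auto simp: independent_lists_def vec.independent_insert)
qed

lemma card_independent_lists:
  fixes V :: "('a::{field,finite} ^ 'n) set"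
  assumes "vec.subspace V"
  shows "card (independent_lists V m) = (\<Prod>i<m. CARD('a) ^ vec.dim V - CARD('a) ^ i)"
proof (induction m)
  case 0
  have "independent_lists V 0 = {[]}" by (auto simp: independent_lists_def vec.independent_empty)
  then show ?case by simp
next
  case (Suc m)
  let ?I = "independent_lists V m" and ?snoc = "\<lambda>(xs, v). xs @ [v]"
  have inj: "inj_on ?snoc (SIGMA xs:?I. V - vec.span (set xs))"
    by (rule inj_onI) auto
  have card_extensions: "card (V - vec.span (set xs)) = CARD('a) ^ vec.dim V - CARD('a) ^ m"
    if "xs \<in> ?I" for xs
  proof -
    have "vec.span (set xs) \<subseteq> V"
      using that assms by (auto simp: independent_lists_def vec.span_minimal)
    moreover have "card (vec.span (set xs)) = CARD('a) ^ m"
      using that card_span_independent[of "set xs"] by (auto simp: independent_lists_def distinct_card)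
    ultimately show ?thesis using card_subspace[OF assms] by (simp add: card_Diff_subset)
  qed
  have "card (independent_lists V (Suc m)) = (\<Sum>xs\<in>?I. card (V - vec.span (set xs)))"
    unfolding independent_lists_Suc card_image[OF inj]
    by (simp add: card_SigmaI finite_independent_lists)
  also have "\<dots> = card ?I * (CARD('a) ^ vec.dim V - CARD('a) ^ m)"
    using card_extensions by simp
  finally show ?case using Suc.IH by simp
qed

lemma span_independent_list:
  fixes W :: "('a::field ^ 'n) set"
  assumes "vec.subspace W" "vec.dim W = m" "xs \<in> independent_lists W m"
  shows "vec.span (set xs) = W"
proof -
  have xs: "set xs \<subseteq> W" "card (set xs) = vec.dim W" "vec.independent (set xs)"
    using assms(2,3) by (auto simp: independent_lists_def distinct_card)
  then have "W \<subseteq> vec.span (set xs)" using vec.card_eq_dim[of "set xs" W] by simp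
  moreover have "vec.span (set xs) \<subseteq> W" using xs assms(1) by (simp add: vec.span_minimal)
  ultimately show ?thesis by blast
qed

text \<open>Double counting: every independent list of length m in V spans exactly one
m-dimensional subspace of V.\<close>

lemma card_subspaces_mult:
  fixes V :: "('a::{field,finite} ^ 'n) set"
  assumes "vec.subspace V"
  shows "card {W. vec.subspace W \<and> vec.dim W = m \<and> W \<subseteq> V} * (\<Prod>i<m. CARD('a) ^ m - CARD('a) ^ i)
         = (\<Prod>i<m. CARD('a) ^ vec.dim V - CARD('a) ^ i)"
proof -
  define Sub where "Sub = {W. vec.subspace W \<and> vec.dim W = m \<and> W \<subseteq> V}"
  have partition: "independent_lists V m = (\<Union>W\<in>Sub. independent_lists W m)"
  proof
    show "independent_lists V m \<subseteq> (\<Union>W\<in>Sub. independent_lists W m)"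
    proof
      fix xs assume xs: "xs \<in> independent_lists V m"
      have "vec.span (set xs) \<in> Sub"
        using xs assms by (auto simp: Sub_def independent_lists_def vec.dim_eq_card_independent
            distinct_card vec.span_minimal)
      moreover have "xs \<in> independent_lists (vec.span (set xs)) m"
        using xs by (auto simp: independent_lists_def vec.span_base)
      ultimately show "xs \<in> (\<Union>W\<in>Sub. independent_lists W m)" by blast
    qed
  qed (auto simp: Sub_def independent_lists_def)
  have "independent_lists W m \<inter> independent_lists W' m = {}"
    if "W \<in> Sub" "W' \<in> Sub" "W \<noteq> W'" for W W'
    using that span_independent_list unfolding Sub_def by blast
  then have "card (independent_lists V m) = (\<Sum>W\<in>Sub. card (independent_lists W m))"
    unfolding partition by (intro card_UN_disjoint) (auto simp: finite_independent_lists)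
  also have "\<dots> = (\<Sum>W\<in>Sub. (\<Prod>i<m. CARD('a) ^ m - CARD('a) ^ i))"
    by (rule sum.cong) (auto simp: Sub_def card_independent_lists)
  finally show ?thesis using card_independent_lists[OF assms] by (simp add: Sub_def)
qed

lemma prod_power_diff_factor:
  fixes Q :: "'a::comm_ring_1"
  assumes "m \<le> d"
  shows "(\<Prod>i<m. Q ^ d - Q ^ i) = Q ^ (\<Sum>i<m. i) * (\<Prod>i<m. Q ^ (d - i) - 1)"
proof -
  have "(\<Prod>i<m. Q ^ d - Q ^ i) = (\<Prod>i<m. Q ^ i * (Q ^ (d - i) - 1))"
  proof (rule prod.cong)
    fix i assume "i \<in> {..<m}"
    then have "Q ^ d = Q ^ i * Q ^ (d - i)" using assms by (simp flip: power_add)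
    then show "Q ^ d - Q ^ i = Q ^ i * (Q ^ (d - i) - 1)" by (simp add: algebra_simps)
  qed simp
  also have "\<dots> = Q ^ (\<Sum>i<m. i) * (\<Prod>i<m. Q ^ (d - i) - 1)"
    by (simp add: prod.distrib power_sum)
  finally show ?thesis .
qed

lemma prod_power_minus_one_reverse:
  fixes Q :: "'a::comm_ring_1"
  shows "(\<Prod>i<m. Q ^ (m - i) - 1) = (\<Prod>i<m. Q ^ (i + 1) - 1)"
proof -
  have "(\<Prod>i<m. Q ^ (m - i) - 1) = (\<Prod>i<m. (\<lambda>j. Q ^ (j + 1) - 1) (m - Suc i))"
    by (rule prod.cong) (auto simp: Suc_diff_Suc)
  also have "\<dots> = (\<Prod>i<m. Q ^ (i + 1) - 1)" by (rule prod.nat_diff_reindex)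
  finally show ?thesis .
qed

lemma prod_power_minus_one_pos:
  fixes Q :: real
  assumes "Q > 1"
  shows "(\<Prod>i<m. Q ^ (i + 1) - 1) > 0"
proof (intro prod_pos ballI)
  fix i
  have "1 < Q ^ (i + 1)" using assms by (intro one_less_power) simp_all
  then show "0 < Q ^ (i + 1) - 1" by simp
qed

lemma gauss_binom_eq_prod_ratio:
  fixes Q :: real
  assumes "Q > 1" "m \<le> d"
  shows "gauss_binom Q d m = (\<Prod>i<m. Q ^ d - Q ^ i) / (\<Prod>i<m. Q ^ m - Q ^ i)"
proof -
  let ?X = "Q ^ (\<Sum>i<m. i)"
  have "(\<Prod>i<m. Q ^ d - Q ^ i) / (\<Prod>i<m. Q ^ m - Q ^ i)
      = (?X * (\<Prod>i<m. Q ^ (d - i) - 1)) / (?X * (\<Prod>i<m. Q ^ (i + 1) - 1))"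
    by (simp only: prod_power_diff_factor[OF assms(2)] prod_power_diff_factor[OF order_refl]
        prod_power_minus_one_reverse)
  also have "\<dots> = (\<Prod>i<m. Q ^ (d - i) - 1) / (\<Prod>i<m. Q ^ (i + 1) - 1)"
    using assms(1) by (intro mult_divide_mult_cancel_left) simp
  finally show ?thesis by (simp add: gauss_binom_def)
qed

lemma card_subspaces_gauss_binom:
  fixes V :: "('a::{field,finite} ^ 'n) set"
  assumes "vec.subspace V" "m \<le> vec.dim V"
  shows "real (card {W. vec.subspace W \<and> vec.dim W = m \<and> W \<subseteq> V})
         = gauss_binom (real CARD('a)) (vec.dim V) m"
proof -
  let ?Q = "real CARD('a)"
  have q: "2 \<le> CARD('a)" by (rule two_le_card_field)
  have real_prod: "real (\<Prod>i<m. CARD('a) ^ e - CARD('a) ^ i) = (\<Prod>i<m. ?Q ^ e - ?Q ^ i)"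
    if "m \<le> e" for e
    unfolding of_nat_prod
    by (rule prod.cong) (use q that in \<open>auto simp: of_nat_diff power_increasing\<close>)
  have "real (card {W. vec.subspace W \<and> vec.dim W = m \<and> W \<subseteq> V}) * (\<Prod>i<m. ?Q ^ m - ?Q ^ i)
      = (\<Prod>i<m. ?Q ^ vec.dim V - ?Q ^ i)"
    using arg_cong[OF card_subspaces_mult[OF assms(1), of m], of real]
    unfolding of_nat_mult real_prod[OF order_refl] real_prod[OF assms(2)] .
  moreover have "(\<Prod>i<m. ?Q ^ m - ?Q ^ i) \<noteq> 0"
    using q by (simp add: prod_zero_iff power_strict_increasing)
  moreover have "?Q > 1" using q by simp
  ultimately show ?thesis using assms(2) by (simp add: eq_divide_imp gauss_binom_eq_prod_ratio)
qed

lemma gauss_binom_Suc: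
  "gauss_binom Q n (Suc k) = gauss_binom Q n k * ((Q ^ (n - k) - 1) / (Q ^ (k + 1) - 1))"
  by (simp add: gauss_binom_def)

lemma gauss_binom_pos:
  fixes Q :: real
  assumes "Q > 1" "k \<le> n"
  shows "gauss_binom Q n k > 0"
  unfolding gauss_binom_def
proof (rule divide_pos_pos)
  show "(\<Prod>i<k. Q ^ (n - i) - 1) > 0"
  proof (intro prod_pos ballI)
    fix i assume "i \<in> {..<k}"
    then have "1 < Q ^ (n - i)" using assms by (intro one_less_power) auto
    then show "0 < Q ^ (n - i) - 1" by simp
  qed
qed (rule prod_power_minus_one_pos[OF assms(1)])

subsection \<open>Extending an affine Cameron-Liebler set\<close>

lemma card_proj_points_proj_space:
  fixes K :: "('a::{field,finite} ^ 'n) set"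
  assumes "K \<in> proj_spaces k"
  shows "real (card {p \<in> proj_points. p \<subseteq> K})
       = (real CARD('a) ^ (k + 1) - 1) / (real CARD('a) - 1)"
  using assms card_proj_points_subspace[of K] by (simp add: proj_spaces_def)

lemma card_proj_points_Int_hyperplane:
  fixes K H :: "('a::{field,finite} ^ 'n) set"
  assumes "vec.subspace H" "Suc (vec.dim H) = CARD('n)" "K \<in> proj_spaces k" "\<not> K \<subseteq> H"
  shows "real (card {p \<in> proj_points. p \<subseteq> K \<inter> H})
       = (real CARD('a) ^ k - 1) / (real CARD('a) - 1)"
proof -
  have K: "vec.subspace K" "vec.dim K = Suc k" using assms(3) by (auto simp: proj_spaces_def)
  then have "vec.dim (K \<inter> H) = k" using dim_Int_hyperplane[OF K(1) assms(1,2,4)] by simp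
  then show ?thesis using card_proj_points_subspace[OF vec.subspace_inter[OF K(1) assms(1)]] by simp
qed

lemma sum_proj_points_split_hyperplane:
  fixes g :: "('a::{field,finite} ^ 'n) set \<Rightarrow> real"
  shows "(\<Sum>p \<in> {p \<in> proj_points. p \<subseteq> K}. g p)
       = (\<Sum>p \<in> {p \<in> aff_spaces H 0. p \<subseteq> K}. g p) + (\<Sum>p \<in> {p \<in> proj_points. p \<subseteq> K \<inter> H}. g p)"
proof -
  have "{p \<in> proj_points. p \<subseteq> K}
      = {p \<in> aff_spaces H 0. p \<subseteq> K} \<union> {p \<in> proj_points. p \<subseteq> K \<inter> H}"
    by (auto simp: aff_spaces_def)
  then show ?thesis by (simp add: sum.union_disjoint aff_spaces_def disjoint_iff)
qed

theorem CL_proj_Un_spaces_in_hyperplane: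
  fixes H :: "('a::{field,finite} ^ 'n) set"
  assumes H: "vec.subspace H" "Suc (vec.dim H) = CARD('n)"
    and L: "CL_aff H k L"
  shows "CL_proj k (L \<union> {K \<in> proj_spaces k. K \<subseteq> H})"
proof -
  define Q where "Q = real CARD('a)"
  obtain f :: "('a ^ 'n) set \<Rightarrow> real"
    where L_aff: "L \<subseteq> aff_spaces H k"
      and f: "\<And>K. K \<in> aff_spaces H k \<Longrightarrow>
        (if K \<in> L then 1 else 0) = (\<Sum>p \<in> {p \<in> aff_spaces H 0. p \<subseteq> K}. f p)"
    using L unfolding CL_aff_def by blast
  define \<theta> where "\<theta> = (Q ^ (k + 1) - 1) / (Q - 1)"
  define \<theta>' where "\<theta>' = (Q ^ k - 1) / (Q - 1)"
  have Q: "Q > 1" using two_le_card_field[where 'a='a] by (simp add: Q_def)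
  then have "\<theta>' < \<theta>" by (simp add: \<theta>'_def \<theta>_def divide_strict_right_mono)
  have "1 < Q ^ (k + 1)" using Q by (intro one_less_power) simp_all
  then have "\<theta> > 0" using Q by (simp add: \<theta>_def)
  define c where "c = 1 / \<theta>"
  define d where "d = c * \<theta>' / (\<theta> - \<theta>')"
  define g where "g p = (if p \<subseteq> H then c else f p - d)" for p :: "('a ^ 'n) set"
  have points_K: "real (card {p \<in> proj_points. p \<subseteq> K}) = \<theta>"
    and points_KH: "\<not> K \<subseteq> H \<Longrightarrow> real (card {p \<in> proj_points. p \<subseteq> K \<inter> H}) = \<theta>'"
    if "K \<in> proj_spaces k" for K :: "('a ^ 'n) set"
    using card_proj_points_proj_space[OF that] card_proj_points_Int_hyperplane[OF H that]
    by (simp_all add: \<theta>_def \<theta>'_def Q_def)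
  show ?thesis
    unfolding CL_proj_def
  proof (intro conjI exI[of _ g] ballI)
    show "L \<union> {K \<in> proj_spaces k. K \<subseteq> H} \<subseteq> proj_spaces k"
      using L_aff by (auto simp: aff_spaces_def)
  next
    fix K :: "('a ^ 'n) set" assume K: "K \<in> proj_spaces k"
    show "(if K \<in> L \<union> {K \<in> proj_spaces k. K \<subseteq> H} then 1 else 0)
        = (\<Sum>p \<in> {p \<in> proj_points. p \<subseteq> K}. g p)"
    proof (cases "K \<subseteq> H")
      case True
      then have "(\<Sum>p \<in> {p \<in> proj_points. p \<subseteq> K}. g p) = (\<Sum>p \<in> {p \<in> proj_points. p \<subseteq> K}. c)"
        by (intro sum.cong) (auto simp: g_def)
      then show ?thesis using K True points_K[OF K] \<open>\<theta> > 0\<close> by (simp add: c_def)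
    next
      case False
      let ?A = "{p \<in> aff_spaces H 0. p \<subseteq> K}" and ?B = "{p \<in> proj_points. p \<subseteq> K \<inter> H}"
      have "K \<in> aff_spaces H k" using K False by (simp add: aff_spaces_def)
      have "real (card ?A) = \<theta> - \<theta>'"
        using sum_proj_points_split_hyperplane[of "\<lambda>_. 1" K H] points_K[OF K] points_KH[OF K False]
        by simp
      have "(\<Sum>p \<in> {p \<in> proj_points. p \<subseteq> K}. g p) = (\<Sum>p \<in> ?A. g p) + (\<Sum>p \<in> ?B. g p)"
        by (rule sum_proj_points_split_hyperplane)
      also have "(\<Sum>p \<in> ?A. g p) = (\<Sum>p \<in> ?A. f p - d)"
        by (intro sum.cong) (auto simp: g_def aff_spaces_def)
      also have "\<dots> = (if K \<in> L then 1 else 0) - d * (\<theta> - \<theta>')"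
        using f[OF \<open>K \<in> aff_spaces H k\<close>] \<open>real (card ?A) = \<theta> - \<theta>'\<close> by (simp add: sum_subtractf)
      also have "(\<Sum>p \<in> ?B. g p) = c * \<theta>'"
        using points_KH[OF K False] by (simp add: g_def)
      also have "d * (\<theta> - \<theta>') = c * \<theta>'" using \<open>\<theta>' < \<theta>\<close> by (simp add: d_def)
      finally show ?thesis using False by simp
    qed
  qed
qed

theorem theorem3p5:
  fixes H :: "('a::{field,finite} ^ 'n) set" and n k :: nat and L :: "('a ^ 'n) set set"
    and x :: real
  assumes "CARD('n) = Suc n"
    and "1 \<le> k" and "k \<le> n - 1"
    and "H \<in> proj_spaces (n - 1)"
    and "CL_aff H k L"
    and "x = real (card L) / gauss_binom (real CARD('a)) n k"
  shows "\<exists>L' :: ('a ^ 'n) set set. CL_proj k L' \<and>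
           real (card L') / gauss_binom (real CARD('a)) n k
             = x + (real CARD('a) ^ (n - k) - 1) / (real CARD('a) ^ (k + 1) - 1)"
proof -
  define Q where "Q = real CARD('a)"
  define Hk where "Hk = {K \<in> (proj_spaces k :: ('a ^ 'n) set set). K \<subseteq> H}"
  have kn: "Suc k \<le> n" using assms(2,3) by simp
  have H: "vec.subspace H" "vec.dim H = n" using assms(4) kn by (auto simp: proj_spaces_def)
  have "Hk = {W. vec.subspace W \<and> vec.dim W = Suc k \<and> W \<subseteq> H}"
    by (auto simp: Hk_def proj_spaces_def)
  then have card_Hk: "real (card Hk) = gauss_binom Q n (Suc k)"
    using card_subspaces_gauss_binom[OF H(1), of "Suc k"] kn H(2) by (simp add: Q_def)
  have "L \<inter> Hk = {}"
    using assms(5) by (auto simp: CL_aff_def aff_spaces_def Hk_def)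
  then have "card (L \<union> Hk) = card L + card Hk" by (simp add: card_Un_disjoint)
  moreover have "gauss_binom Q n k \<noteq> 0"
    using gauss_binom_pos[of Q k n] two_le_card_field[where 'a='a] kn by (simp add: Q_def)
  moreover have "CL_proj k (L \<union> Hk)"
    using CL_proj_Un_spaces_in_hyperplane[OF H(1) _ assms(5)] H(2) assms(1) by (simp add: Hk_def)
  ultimately show ?thesis
    by (intro exI[of _ "L \<union> Hk"])
      (simp add: card_Hk gauss_binom_Suc assms(6) add_divide_distrib Q_def)
qed

end
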